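(* Let $k$ be an algebraically closed field of characteristic not $2$ and let $D(\Lambda_2)$ be the $k$-algebra generated by $x,X,g,G$ subject to $x^2=X^2=0$, $g^2=G^2=1$, $gG=Gg$, $gx=-xg$, $gX=-Xg$, $Gx=-xG$, $GX=-XG$, $xX+Xx=1-gG$. For $\alpha,\beta\in k$ not both zero let $H_{\alpha\beta}$ be the subalgebra of $D(\Lambda_2)$ generated by $g$, $G$ and $\alpha x+\beta X$. Then $D(\Lambda_2)$ is free as a left $H_{\alpha\beta}$-module. *)

theory Defs
  imports "HOL-Computational_Algebra.Polynomial"
begin

text \<open>Free (noncommutative, unital) k-algebra on the four generators x, X, g, G:
  finitely supported functions from words to k, with concatenation-convolution product.\<close>

datatype gen = Gx | GX | Gg | GG

type_synonym 'k falg = "gen list \<Rightarrow> 'k"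

definition fa_carrier :: "('k::field) falg set" where
  "fa_carrier = {f. finite {w. f w \<noteq> 0}}"

definition fa_zero :: "('k::field) falg" where "fa_zero = (\<lambda>w. 0)"
definition fa_one :: "('k::field) falg" where "fa_one = (\<lambda>w. if w = [] then 1 else 0)"
definition fa_var :: "gen \<Rightarrow> ('k::field) falg" where
  "fa_var a = (\<lambda>w. if w = [a] then 1 else 0)"
definition fa_add :: "('k::field) falg \<Rightarrow> 'k falg \<Rightarrow> 'k falg" where
  "fa_add f g = (\<lambda>w. f w + g w)"
definition fa_smult :: "'k::field \<Rightarrow> 'k falg \<Rightarrow> 'k falg" where
  "fa_smult c f = (\<lambda>w. c * f w)"
definition fa_sub :: "('k::field) falg \<Rightarrow> 'k falg \<Rightarrow> 'k falg" where
  "fa_sub f g = (\<lambda>w. f w - g w)"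
definition fa_mult :: "('k::field) falg \<Rightarrow> 'k falg \<Rightarrow> 'k falg" where
  "fa_mult f g = (\<lambda>w. \<Sum>i\<le>length w. f (take i w) * g (drop i w))"

definition fa_sum :: "('b \<Rightarrow> ('k::field) falg) \<Rightarrow> 'b set \<Rightarrow> 'k falg" where
  "fa_sum F S = (\<lambda>w. \<Sum>b\<in>S. F b w)"

abbreviation "vx \<equiv> fa_var Gx"
abbreviation "vX \<equiv> fa_var GX"
abbreviation "vg \<equiv> fa_var Gg"
abbreviation "vG \<equiv> fa_var GG"

definition DL2_relations :: "('k::field) falg set" where
  "DL2_relations =
    { fa_mult vx vx, fa_mult vX vX,
      fa_sub (fa_mult vg vg) fa_one, fa_sub (fa_mult vG vG) fa_one,
      fa_sub (fa_mult vg vG) (fa_mult vG vg),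
      fa_add (fa_mult vg vx) (fa_mult vx vg),
      fa_add (fa_mult vg vX) (fa_mult vX vg),
      fa_add (fa_mult vG vx) (fa_mult vx vG),
      fa_add (fa_mult vG vX) (fa_mult vX vG),
      fa_sub (fa_add (fa_mult vx vX) (fa_mult vX vx)) (fa_sub fa_one (fa_mult vg vG)) }"

text \<open>The two-sided ideal of the free algebra generated by the relations;
  D(Lambda_2) is the free algebra modulo this ideal.\<close>
inductive_set DL2_ideal :: "('k::field) falg set" where
  rel: "r \<in> DL2_relations \<Longrightarrow> r \<in> DL2_ideal"
| zero: "fa_zero \<in> DL2_ideal"
| add: "a \<in> DL2_ideal \<Longrightarrow> b \<in> DL2_ideal \<Longrightarrow> fa_add a b \<in> DL2_ideal"
| mult: "a \<in> DL2_ideal \<Longrightarrow> p \<in> fa_carrier \<Longrightarrow> q \<in> fa_carrier \<Longrightarrow>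
         fa_mult (fa_mult p a) q \<in> DL2_ideal"

text \<open>Preimage in the free algebra of the subalgebra H_{alpha beta} generated by
  g, G and alpha x + beta X (a unital subalgebra).\<close>
inductive_set H_sub :: "'k::field \<Rightarrow> 'k \<Rightarrow> 'k falg set" for \<alpha> \<beta> where
  one: "fa_one \<in> H_sub \<alpha> \<beta>"
| gen_g: "vg \<in> H_sub \<alpha> \<beta>"
| gen_G: "vG \<in> H_sub \<alpha> \<beta>"
| gen_y: "fa_add (fa_smult \<alpha> vx) (fa_smult \<beta> vX) \<in> H_sub \<alpha> \<beta>"
| add: "a \<in> H_sub \<alpha> \<beta> \<Longrightarrow> b \<in> H_sub \<alpha> \<beta> \<Longrightarrow> fa_add a b \<in> H_sub \<alpha> \<beta>"
| smult: "a \<in> H_sub \<alpha> \<beta> \<Longrightarrow> fa_smult c a \<in> H_sub \<alpha> \<beta>"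
| mult: "a \<in> H_sub \<alpha> \<beta> \<Longrightarrow> b \<in> H_sub \<alpha> \<beta> \<Longrightarrow> fa_mult a b \<in> H_sub \<alpha> \<beta>"

text \<open>D(Lambda_2) is free as a left H-module: there is a family B of elements (given by
  representatives in the free algebra) such that every element of D(Lambda_2) is a finite
  H-linear combination of B (modulo the ideal), and such combinations are unique, i.e.
  a combination that vanishes in D(Lambda_2) has all coefficients vanishing in D(Lambda_2).\<close>
definition DL2_free_left_module_over_H :: "'k::field \<Rightarrow> 'k \<Rightarrow> bool" where
  "DL2_free_left_module_over_H \<alpha> \<beta> \<longleftrightarrow>
    (\<exists>B \<subseteq> (fa_carrier :: 'k falg set).
      (\<forall>f\<in>fa_carrier. \<exists>c. (\<forall>b\<in>B. c b \<in> H_sub \<alpha> \<beta>) \<and> finite {b\<in>B. c b \<noteq> fa_zero} \<and>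
          fa_sub f (fa_sum (\<lambda>b. fa_mult (c b) b) {b\<in>B. c b \<noteq> fa_zero}) \<in> DL2_ideal) \<and>
      (\<forall>c. (\<forall>b\<in>B. c b \<in> H_sub \<alpha> \<beta>) \<and> finite {b\<in>B. c b \<noteq> fa_zero} \<and>
          fa_sum (\<lambda>b. fa_mult (c b) b) {b\<in>B. c b \<noteq> fa_zero} \<in> DL2_ideal
          \<longrightarrow> (\<forall>b\<in>B. c b \<in> DL2_ideal)))"

definition algebraically_closed_field :: "'k::field itself \<Rightarrow> bool" where
  "algebraically_closed_field _ \<longleftrightarrow>
     (\<forall>p :: 'k poly. degree p \<ge> 1 \<longrightarrow> (\<exists>z. poly p z = 0))"

end

theory Submission
  imports Defs
begin

text \<open>Put \<open>y = \<alpha>x + \<beta>X\<close>. It anticommutes with \<open>g\<close> and \<open>G\<close> and satisfies \<open>y\<^sup>2 = \<alpha>\<beta>(1 - gG)\<close>,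
  so \<open>H\<^sub>\<alpha>\<^sub>\<beta>\<close> is spanned by the eight monomials \<open>g\<^sup>a G\<^sup>b y\<^sup>d\<close>. Take \<open>z = x\<close> if \<open>\<beta> \<noteq> 0\<close> and
  \<open>z = X\<close> otherwise; then \<open>x\<close> and \<open>X\<close> are combinations of \<open>y\<close> and \<open>z\<close>, and the relations show that
  \<open>H + Hz\<close> is stable under right multiplication by every generator, so \<open>D(\<Lambda>\<^sub>2) = H + Hz\<close>.
  For independence, \<open>D(\<Lambda>\<^sub>2)\<close> acts on a 16-dimensional space by explicit matrices; applied to a
  suitable basis vector \<open>e\<^sub>0\<close>, the sixteen vectors \<open>m e\<^sub>0\<close> and \<open>m z e\<^sub>0\<close> (\<open>m\<close> a monomial of \<open>H\<close>) are
  linearly independent, so \<open>a + b z = 0\<close> with \<open>a, b \<in> H\<close> forces \<open>a = b = 0\<close>. Thus \<open>{1, z}\<close> is an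
  \<open>H\<close>-basis of \<open>D(\<Lambda>\<^sub>2)\<close>.\<close>

section \<open>The free algebra\<close>

definition fa_supp :: "('k::field) falg \<Rightarrow> gen list set" where
  "fa_supp f = {w. f w \<noteq> 0}"

definition fa_word :: "gen list \<Rightarrow> ('k::field) falg" where
  "fa_word w = (\<lambda>u. if u = w then 1 else 0)"

lemma fa_carrier_iff: "f \<in> fa_carrier \<longleftrightarrow> finite (fa_supp f)"
  by (simp add: fa_carrier_def fa_supp_def)

lemma fa_supp_add: "fa_supp (fa_add f g) \<subseteq> fa_supp f \<union> fa_supp g"
  by (auto simp: fa_supp_def fa_add_def)

lemma fa_supp_sub: "fa_supp (fa_sub f g) \<subseteq> fa_supp f \<union> fa_supp g"
  by (auto simp: fa_supp_def fa_sub_def)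

lemma fa_supp_smult: "fa_supp (fa_smult c f) \<subseteq> fa_supp f"
  by (auto simp: fa_supp_def fa_smult_def)

lemma fa_supp_mult: "fa_supp (fa_mult f g) \<subseteq> (\<lambda>(u, v). u @ v) ` (fa_supp f \<times> fa_supp g)"
proof
  fix w assume "w \<in> fa_supp (fa_mult f g)"
  then have "(\<Sum>i\<le>length w. f (take i w) * g (drop i w)) \<noteq> 0"
    by (simp add: fa_supp_def fa_mult_def)
  then obtain i where "f (take i w) * g (drop i w) \<noteq> 0"
    by (meson sum.not_neutral_contains_not_neutral)
  then show "w \<in> (\<lambda>(u, v). u @ v) ` (fa_supp f \<times> fa_supp g)"
    by (simp add: fa_supp_def image_iff) (metis append_take_drop_id)
qed

lemma fa_carrier_add: "f \<in> fa_carrier \<Longrightarrow> g \<in> fa_carrier \<Longrightarrow> fa_add f g \<in> fa_carrier"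
  using fa_supp_add fa_carrier_iff by (metis finite_Un finite_subset)

lemma fa_carrier_sub: "f \<in> fa_carrier \<Longrightarrow> g \<in> fa_carrier \<Longrightarrow> fa_sub f g \<in> fa_carrier"
  using fa_supp_sub fa_carrier_iff by (metis finite_Un finite_subset)

lemma fa_carrier_smult: "f \<in> fa_carrier \<Longrightarrow> fa_smult c f \<in> fa_carrier"
  using fa_supp_smult fa_carrier_iff by (metis finite_subset)

lemma fa_carrier_mult: "f \<in> fa_carrier \<Longrightarrow> g \<in> fa_carrier \<Longrightarrow> fa_mult f g \<in> fa_carrier"
  using fa_supp_mult fa_carrier_iff by (metis finite_SigmaI finite_imageI finite_subset)

lemma fa_carrier_zero: "fa_zero \<in> fa_carrier"
  by (simp add: fa_carrier_def fa_zero_def)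

lemma fa_carrier_one: "fa_one \<in> fa_carrier"
  by (simp add: fa_carrier_def fa_one_def)

lemma fa_carrier_var: "fa_var a \<in> fa_carrier"
  by (simp add: fa_carrier_def fa_var_def)

lemma fa_carrier_word: "fa_word w \<in> fa_carrier"
  by (simp add: fa_carrier_def fa_word_def)

lemma fa_sum_empty: "fa_sum F {} = fa_zero"
  by (simp add: fun_eq_iff fa_sum_def fa_zero_def)

lemma fa_sum_insert: "x \<notin> S \<Longrightarrow> finite S \<Longrightarrow> fa_sum F (insert x S) = fa_add (F x) (fa_sum F S)"
  by (simp add: fun_eq_iff fa_sum_def fa_add_def)

lemma fa_carrier_sum:
  "finite S \<Longrightarrow> (\<And>s. s \<in> S \<Longrightarrow> F s \<in> fa_carrier) \<Longrightarrow> fa_sum F S \<in> fa_carrier"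
  by (induction S rule: finite_induct) (auto simp: fa_sum_insert fa_sum_empty fa_carrier_zero fa_carrier_add)

lemmas fa_carrier_intros =
  fa_carrier_add fa_carrier_sub fa_carrier_smult fa_carrier_mult
  fa_carrier_zero fa_carrier_one fa_carrier_var fa_carrier_word

lemma fa_mult_var_left:
  "fa_mult (fa_var a) h u = (case u of [] \<Rightarrow> 0 | b # u' \<Rightarrow> if b = a then h u' else 0)"
proof (cases u)
  case Nil
  then show ?thesis by (simp add: fa_mult_def fa_var_def)
next
  case (Cons b u')
  have "fa_mult (fa_var a) h u =
      fa_var a [] * h (b # u') +
      (\<Sum>i\<le>length u'. fa_var a (take (Suc i) (b # u')) * h (drop (Suc i) (b # u')))"
    unfolding fa_mult_def Cons by (simp only: length_Cons sum.atMost_Suc_shift) simp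
  also have "\<dots> = (\<Sum>i\<le>length u'. fa_var a (b # take i u') * h (drop i u'))"
    by (simp add: fa_var_def)
  also have "\<dots> = (\<Sum>i\<in>{0}. fa_var a (b # take i u') * h (drop i u'))"
    by (rule sum.mono_neutral_right) (auto simp: fa_var_def)
  finally show ?thesis using Cons by (simp add: fa_var_def)
qed

lemma fa_mult_one_left: "fa_mult fa_one f = f"
proof
  fix u
  have "fa_mult fa_one f u = (\<Sum>i\<in>{0}. fa_one (take i u) * f (drop i u))"
    unfolding fa_mult_def by (rule sum.mono_neutral_right) (auto simp: fa_one_def)
  then show "fa_mult fa_one f u = f u" by (simp add: fa_one_def)
qed

lemma fa_mult_one_right: "fa_mult f fa_one = f"
proof
  fix u
  have "fa_mult f fa_one u = (\<Sum>i\<in>{length u}. f (take i u) * fa_one (drop i u))"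
    unfolding fa_mult_def by (rule sum.mono_neutral_right) (auto simp: fa_one_def)
  then show "fa_mult f fa_one u = f u" by (simp add: fa_one_def)
qed

lemma fa_word_Nil: "fa_word [] = fa_one"
  by (simp add: fa_word_def fa_one_def)

lemma fa_word_Cons: "fa_word (a # w) = fa_mult (fa_var a) (fa_word w)"
  by (auto simp: fun_eq_iff fa_mult_var_left fa_word_def split: list.split)

lemma fa_mult_add_left: "fa_mult (fa_add f g) h = fa_add (fa_mult f h) (fa_mult g h)"
  by (simp add: fa_mult_def fa_add_def distrib_right sum.distrib)

lemma fa_mult_add_right: "fa_mult h (fa_add f g) = fa_add (fa_mult h f) (fa_mult h g)"
  by (simp add: fa_mult_def fa_add_def distrib_left sum.distrib)

lemma fa_mult_smult_left: "fa_mult (fa_smult c f) h = fa_smult c (fa_mult f h)"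
  by (simp add: fa_mult_def fa_smult_def sum_distrib_left mult.assoc)

lemma fa_mult_smult_right: "fa_mult h (fa_smult c f) = fa_smult c (fa_mult h f)"
  by (simp add: fa_mult_def fa_smult_def sum_distrib_left algebra_simps)

lemma fa_mult_sum_left: "fa_mult (fa_sum F S) h = fa_sum (\<lambda>s. fa_mult (F s) h) S"
  by (simp add: fun_eq_iff fa_mult_def fa_sum_def sum_distrib_right sum.swap[of _ S])

lemma fa_expansion: "f \<in> fa_carrier \<Longrightarrow> f = fa_sum (\<lambda>w. fa_smult (f w) (fa_word w)) (fa_supp f)"
proof (rule ext)
  fix u assume "f \<in> fa_carrier"
  have "fa_sum (\<lambda>w. fa_smult (f w) (fa_word w)) (fa_supp f) u = (\<Sum>w\<in>fa_supp f. if w = u then f w else 0)"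
    unfolding fa_sum_def fa_smult_def fa_word_def by (rule sum.cong) auto
  also have "\<dots> = f u"
    using \<open>f \<in> fa_carrier\<close> by (simp add: fa_carrier_iff fa_supp_def)
  finally show "f u = fa_sum (\<lambda>w. fa_smult (f w) (fa_word w)) (fa_supp f) u" by simp
qed

lemma fa_mult_expansion:
  "f \<in> fa_carrier \<Longrightarrow> fa_mult f h = fa_sum (\<lambda>w. fa_smult (f w) (fa_mult (fa_word w) h)) (fa_supp f)"
  by (subst fa_expansion) (simp_all add: fa_mult_sum_left fa_mult_smult_left)

lemma fa_mult_var_assoc: "fa_mult (fa_var a) (fa_mult k h) = fa_mult (fa_mult (fa_var a) k) h"
proof
  fix u
  show "fa_mult (fa_var a) (fa_mult k h) u = fa_mult (fa_mult (fa_var a) k) h u"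
  proof (cases u)
    case Nil
    then show ?thesis by (simp add: fa_mult_var_left fa_mult_def)
  next
    case (Cons b u')
    have "fa_mult (fa_mult (fa_var a) k) h u =
        fa_mult (fa_var a) k [] * h (b # u') +
        (\<Sum>i\<le>length u'. fa_mult (fa_var a) k (b # take i u') * h (drop i u'))"
      unfolding Cons by (subst (1) fa_mult_def, simp only: length_Cons sum.atMost_Suc_shift) simp
    also have "\<dots> = (\<Sum>i\<le>length u'. (if b = a then k (take i u') else 0) * h (drop i u'))"
      by (simp add: fa_mult_var_left)
    also have "\<dots> = fa_mult (fa_var a) (fa_mult k h) u"
      by (subst fa_mult_var_left, cases "b = a") (auto simp: Cons fa_mult_def)
    finally show ?thesis by simp
  qed
qed

lemma fa_mult_word_assoc: "fa_mult (fa_word w) (fa_mult g h) = fa_mult (fa_mult (fa_word w) g) h"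
  by (induction w) (simp_all add: fa_word_Nil fa_mult_one_left fa_word_Cons fa_mult_var_assoc[symmetric])

lemma fa_mult_assoc:
  "f \<in> fa_carrier \<Longrightarrow> fa_mult f (fa_mult g h) = fa_mult (fa_mult f g) h"
  by (simp add: fa_mult_expansion fa_mult_word_assoc fa_mult_sum_left fa_mult_smult_left)

section \<open>A representation of the free algebra killing the relations\<close>

text \<open>A 16-dimensional representation of the generators satisfying the defining relations of
  \<open>D(\<Lambda>\<^sub>2)\<close>; it certifies that \<open>1 \<noteq> 0\<close> in \<open>D(\<Lambda>\<^sub>2)\<close> and, evaluated at a single basis vector,
  the independence half of freeness.\<close>

type_synonym 'k vec16 = "bool \<times> bool \<times> bool \<times> bool \<Rightarrow> 'k"

definition sign_eq :: "bool \<Rightarrow> bool \<Rightarrow> 'k::field" where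
  "sign_eq a b = (if a = b then 1 else -1)"

fun rep_gen :: "gen \<Rightarrow> ('k::field) vec16 \<Rightarrow> 'k vec16" where
  "rep_gen Gg v = (\<lambda>(a, b, c, d). v (\<not> a, b, c, d))"
| "rep_gen GG v = (\<lambda>(a, b, c, d). v (a, \<not> b, c, d))"
| "rep_gen Gx v = (\<lambda>(a, b, c, d). if c then sign_eq a b * v (a, b, False, d) else 0)"
| "rep_gen GX v = (\<lambda>(a, b, c, d).
      if c then (if d then - (sign_eq a b * v (a, b, True, False)) else 0)
      else if d then sign_eq a b * (v (a, b, False, False) + v (a, b, True, True) - v (\<not> a, \<not> b, True, True))
      else sign_eq a b * (v (a, b, True, False) - v (\<not> a, \<not> b, True, False)))"

primrec rep_word :: "gen list \<Rightarrow> ('k::field) vec16 \<Rightarrow> 'k vec16" where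
  "rep_word [] v = v"
| "rep_word (a # w) v = rep_gen a (rep_word w v)"

definition fa_rep :: "('k::field) falg \<Rightarrow> 'k vec16 \<Rightarrow> 'k vec16" where
  "fa_rep f v = (\<lambda>i. \<Sum>w\<in>fa_supp f. f w * rep_word w v i)"

lemma rep_gen_sum: "rep_gen a (\<lambda>i. \<Sum>s\<in>S. c s * u s i) = (\<lambda>i. \<Sum>s\<in>S. c s * rep_gen a (u s) i)"
  by (cases a)
     (auto simp: fun_eq_iff sum_distrib_left sum.distrib sum_subtractf sum_negf algebra_simps
        split: prod.split)

lemma rep_word_zero: "rep_word w (\<lambda>i. 0) = (\<lambda>i. 0)"
proof (induction w)
  case (Cons a w)
  then show ?case by (cases a) (auto simp: fun_eq_iff)
qed simp

lemma fa_rep_superset: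
  assumes "finite S" "fa_supp f \<subseteq> S"
  shows "fa_rep f v = (\<lambda>i. \<Sum>w\<in>S. f w * rep_word w v i)"
  unfolding fa_rep_def
  by (rule ext, rule sum.mono_neutral_left) (use assms in \<open>auto simp: fa_supp_def\<close>)

lemma fa_rep_add:
  assumes "f \<in> fa_carrier" "g \<in> fa_carrier"
  shows "fa_rep (fa_add f g) v = (\<lambda>i. fa_rep f v i + fa_rep g v i)"
proof -
  have fin: "finite (fa_supp f \<union> fa_supp g)" using assms by (simp add: fa_carrier_iff)
  show ?thesis
    using fa_rep_superset[OF fin, of "fa_add f g"] fa_rep_superset[OF fin, of f]
      fa_rep_superset[OF fin, of g] fa_supp_add[of f g]
    by (simp add: fa_add_def distrib_right sum.distrib)
qed

lemma fa_rep_sub: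
  assumes "f \<in> fa_carrier" "g \<in> fa_carrier"
  shows "fa_rep (fa_sub f g) v = (\<lambda>i. fa_rep f v i - fa_rep g v i)"
proof -
  have fin: "finite (fa_supp f \<union> fa_supp g)" using assms by (simp add: fa_carrier_iff)
  show ?thesis
    using fa_rep_superset[OF fin, of "fa_sub f g"] fa_rep_superset[OF fin, of f]
      fa_rep_superset[OF fin, of g] fa_supp_sub[of f g]
    by (simp add: fa_sub_def left_diff_distrib sum_subtractf)
qed

lemma fa_rep_smult:
  assumes "f \<in> fa_carrier"
  shows "fa_rep (fa_smult c f) v = (\<lambda>i. c * fa_rep f v i)"
proof -
  have fin: "finite (fa_supp f)" using assms by (simp add: fa_carrier_iff)
  show ?thesis
    using fa_rep_superset[OF fin, of "fa_smult c f"] fa_supp_smult[of c f] by (simp add: fa_rep_def fa_smult_def sum_distrib_left mult.assoc)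
qed

lemma fa_rep_zero: "fa_rep fa_zero v = (\<lambda>i. 0)"
  by (simp add: fa_rep_def fa_supp_def fa_zero_def)

lemma fa_rep_one: "fa_rep fa_one v = v"
  using fa_rep_superset[of "{[]}" fa_one v] by (auto simp: fa_supp_def fa_one_def)

lemma fa_rep_var: "fa_rep (fa_var a) v = rep_gen a v"
  using fa_rep_superset[of "{[a]}" "fa_var a" v] by (auto simp: fa_supp_def fa_var_def)

lemma fa_rep_var_mult:
  assumes h: "h \<in> fa_carrier"
  shows "fa_rep (fa_mult (fa_var a) h) v = rep_gen a (fa_rep h v)"
proof -
  have fin: "finite (Cons a ` fa_supp h)" using h by (simp add: fa_carrier_iff)
  have "fa_supp (fa_mult (fa_var a) h) \<subseteq> Cons a ` fa_supp h"
    by (clarsimp simp: fa_supp_def, case_tac x) (auto simp: fa_mult_var_left split: if_splits)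
  then have "fa_rep (fa_mult (fa_var a) h) v =
      (\<lambda>i. \<Sum>w\<in>Cons a ` fa_supp h. fa_mult (fa_var a) h w * rep_word w v i)"
    by (rule fa_rep_superset[OF fin])
  also have "\<dots> = (\<lambda>i. \<Sum>u\<in>fa_supp h. h u * rep_gen a (rep_word u v) i)"
    by (subst sum.reindex) (auto simp: fa_mult_var_left)
  also have "\<dots> = rep_gen a (fa_rep h v)"
    by (simp add: fa_rep_def rep_gen_sum)
  finally show ?thesis .
qed

lemma fa_rep_word_mult:
  "h \<in> fa_carrier \<Longrightarrow> fa_rep (fa_mult (fa_word w) h) v = rep_word w (fa_rep h v)"
proof (induction w)
  case Nil
  then show ?case by (simp add: fa_word_Nil fa_mult_one_left)
next
  case (Cons a w)
  then show ?case
    by (simp add: fa_word_Cons fa_mult_var_assoc[symmetric] fa_rep_var_mult fa_carrier_intros)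
qed

lemma fa_rep_sum:
  "finite S \<Longrightarrow> (\<And>s. s \<in> S \<Longrightarrow> F s \<in> fa_carrier) \<Longrightarrow>
    fa_rep (fa_sum F S) v = (\<lambda>i. \<Sum>s\<in>S. fa_rep (F s) v i)"
  by (induction S rule: finite_induct)
     (simp_all add: fa_sum_empty fa_rep_zero fa_sum_insert fa_rep_add fa_carrier_sum)

lemma fa_rep_mult:
  assumes f: "f \<in> fa_carrier" and h: "h \<in> fa_carrier"
  shows "fa_rep (fa_mult f h) v = fa_rep f (fa_rep h v)"
proof -
  have fin: "finite (fa_supp f)" using f by (simp add: fa_carrier_iff)
  have "fa_rep (fa_mult f h) v =
      (\<lambda>i. \<Sum>w\<in>fa_supp f. fa_rep (fa_smult (f w) (fa_mult (fa_word w) h)) v i)"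
    by (simp add: fa_mult_expansion[OF f] fa_rep_sum[OF fin] fa_carrier_intros h)
  also have "\<dots> = (\<lambda>i. \<Sum>w\<in>fa_supp f. f w * rep_word w (fa_rep h v) i)"
    by (simp add: fa_rep_smult fa_carrier_intros h fa_rep_word_mult)
  also have "\<dots> = fa_rep f (fa_rep h v)"
    by (simp add: fa_rep_def)
  finally show ?thesis .
qed

lemma fa_rep_zero_vec: "fa_rep f (\<lambda>i. 0) = (\<lambda>i. 0)"
  by (simp add: fa_rep_def rep_word_zero)

lemma DL2_relations_carrier: "r \<in> DL2_relations \<Longrightarrow> r \<in> fa_carrier"
  by (auto simp: DL2_relations_def intro!: fa_carrier_intros)

lemma DL2_ideal_carrier: "r \<in> DL2_ideal \<Longrightarrow> r \<in> fa_carrier"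
  by (induction rule: DL2_ideal.induct)
     (auto intro: DL2_relations_carrier fa_carrier_zero fa_carrier_add fa_carrier_mult)

lemma fa_rep_relation: "r \<in> DL2_relations \<Longrightarrow> fa_rep r v = (\<lambda>i. 0)"
  unfolding DL2_relations_def
  apply (simp only: insert_iff empty_iff)
  apply (elim disjE; simp only:)
  apply (simp_all add: fa_rep_mult fa_rep_add fa_rep_sub fa_rep_var fa_rep_one fa_carrier_intros)
  apply (simp_all add: fun_eq_iff sign_eq_def split: prod.splits)
  done

lemma fa_rep_ideal: "r \<in> DL2_ideal \<Longrightarrow> fa_rep r v = (\<lambda>i. 0)"
proof (induction arbitrary: v rule: DL2_ideal.induct)
  case (rel r)
  then show ?case by (rule fa_rep_relation)
next
  case zero
  then show ?case by (simp add: fa_rep_zero)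
next
  case (add a b)
  then show ?case by (simp add: fa_rep_add DL2_ideal_carrier)
next
  case (mult a p q)
  then show ?case by (simp add: fa_rep_mult DL2_ideal_carrier fa_carrier_mult fa_rep_zero_vec)
qed

section \<open>The algebra \<open>D(\<Lambda>\<^sub>2)\<close> as a quotient ring\<close>

typedef (overloaded) 'k free_alg = "fa_carrier :: ('k::field) falg set"
  morphisms Rep_fa Abs_fa
  using fa_carrier_zero by blast

setup_lifting type_definition_free_alg

instantiation free_alg :: (field) ring_1
begin

lift_definition zero_free_alg :: "'k::field free_alg" is fa_zero by (rule fa_carrier_zero)
lift_definition one_free_alg :: "'k::field free_alg" is fa_one by (rule fa_carrier_one)
lift_definition plus_free_alg :: "'k::field free_alg \<Rightarrow> 'k free_alg \<Rightarrow> 'k free_alg"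
  is fa_add by (rule fa_carrier_add)
lift_definition minus_free_alg :: "'k::field free_alg \<Rightarrow> 'k free_alg \<Rightarrow> 'k free_alg"
  is fa_sub by (rule fa_carrier_sub)
lift_definition uminus_free_alg :: "'k::field free_alg \<Rightarrow> 'k free_alg"
  is "fa_smult (-1)" by (rule fa_carrier_smult)
lift_definition times_free_alg :: "'k::field free_alg \<Rightarrow> 'k free_alg \<Rightarrow> 'k free_alg"
  is fa_mult by (rule fa_carrier_mult)

instance
proof
  fix a b c :: "'a free_alg"
  show "a * b * c = a * (b * c)" by transfer (simp add: fa_mult_assoc)
  show "(a + b) * c = a * c + b * c" by transfer (simp add: fa_mult_add_left)
  show "a * (b + c) = a * b + a * c" by transfer (simp add: fa_mult_add_right)
  show "1 * a = a" by transfer (simp add: fa_mult_one_left)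
  show "a * 1 = a" by transfer (simp add: fa_mult_one_right)
  show "a + b + c = a + (b + c)" by transfer (simp add: fa_add_def add.assoc)
  show "a + b = b + a" by transfer (simp add: fa_add_def add.commute)
  show "0 + a = a" by transfer (simp add: fa_add_def fa_zero_def)
  show "- a + a = 0" by transfer (simp add: fa_add_def fa_zero_def fa_smult_def)
  show "a - b = a + - b" by transfer (simp add: fa_add_def fa_sub_def fa_smult_def)
  show "(0::'a free_alg) \<noteq> 1" by transfer (simp add: fa_zero_def fa_one_def fun_eq_iff)
qed

end

lemma Rep_fa_ideal_zero: "Rep_fa (0::'k::field free_alg) \<in> DL2_ideal"
  by (simp add: zero_free_alg.rep_eq DL2_ideal.zero)

lemma Rep_fa_ideal_add: "Rep_fa a \<in> DL2_ideal \<Longrightarrow> Rep_fa b \<in> DL2_ideal \<Longrightarrow> Rep_fa (a + b) \<in> DL2_ideal"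
  by (simp add: plus_free_alg.rep_eq DL2_ideal.add)

lemma Rep_fa_ideal_mult: "Rep_fa a \<in> DL2_ideal \<Longrightarrow> Rep_fa (p * a * q) \<in> DL2_ideal"
  by (simp add: times_free_alg.rep_eq DL2_ideal.mult Rep_fa)

lemma Rep_fa_ideal_mult_left: "Rep_fa a \<in> DL2_ideal \<Longrightarrow> Rep_fa (p * a) \<in> DL2_ideal"
  using Rep_fa_ideal_mult[of a p 1] by simp

lemma Rep_fa_ideal_mult_right: "Rep_fa a \<in> DL2_ideal \<Longrightarrow> Rep_fa (a * q) \<in> DL2_ideal"
  using Rep_fa_ideal_mult[of a 1 q] by simp

lemma Rep_fa_ideal_uminus: "Rep_fa a \<in> DL2_ideal \<Longrightarrow> Rep_fa (- a) \<in> DL2_ideal"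
  using Rep_fa_ideal_mult_left[of a "-1"] by simp

lemma Rep_fa_one_notin_ideal: "Rep_fa (1::'k::field free_alg) \<notin> DL2_ideal"
proof
  assume "Rep_fa (1::'k free_alg) \<in> DL2_ideal"
  then have "fa_rep (Rep_fa (1::'k free_alg)) (\<lambda>i. 1) = (\<lambda>i. 0)" by (rule fa_rep_ideal)
  then show False by (simp add: one_free_alg.rep_eq fa_rep_one fun_eq_iff)
qed

definition dl2_rel :: "'k::field free_alg \<Rightarrow> 'k free_alg \<Rightarrow> bool" where
  "dl2_rel a b \<longleftrightarrow> Rep_fa (a - b) \<in> DL2_ideal"

lemma dl2_rel_refl: "dl2_rel a a"
  by (simp add: dl2_rel_def Rep_fa_ideal_zero)

lemma equivp_dl2_rel: "equivp (dl2_rel :: 'k::field free_alg \<Rightarrow> _)"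
proof (rule equivpI)
  show "reflp dl2_rel" by (simp add: reflp_def dl2_rel_refl)
  show "symp (dl2_rel :: 'k::field free_alg \<Rightarrow> _)"
  proof (rule sympI)
    fix a b :: "'k free_alg" assume "dl2_rel a b"
    from Rep_fa_ideal_uminus[OF this[unfolded dl2_rel_def]] show "dl2_rel b a"
      by (simp add: dl2_rel_def)
  qed
  show "transp (dl2_rel :: 'k::field free_alg \<Rightarrow> _)"
  proof (rule transpI)
    fix a b c :: "'k free_alg" assume "dl2_rel a b" "dl2_rel b c"
    from Rep_fa_ideal_add[OF this[unfolded dl2_rel_def]] show "dl2_rel a c"
      by (simp add: dl2_rel_def)
  qed
qed

quotient_type (overloaded) 'k dl2 = "'k::field free_alg" / dl2_rel
  by (rule equivp_dl2_rel)

instantiation dl2 :: (field) ring_1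
begin

lift_definition zero_dl2 :: "'k::field dl2" is "0::'k free_alg" .
lift_definition one_dl2 :: "'k::field dl2" is "1::'k free_alg" .

lift_definition plus_dl2 :: "'k::field dl2 \<Rightarrow> 'k dl2 \<Rightarrow> 'k dl2" is "(+)"
proof -
  fix a a' b b' :: "'k free_alg"
  assume "dl2_rel a a'" "dl2_rel b b'"
  from Rep_fa_ideal_add[OF this[unfolded dl2_rel_def]] show "dl2_rel (a + b) (a' + b')"
    unfolding dl2_rel_def by (simp add: algebra_simps)
qed

lift_definition uminus_dl2 :: "'k::field dl2 \<Rightarrow> 'k dl2" is "uminus"
proof -
  fix a a' :: "'k free_alg"
  assume "dl2_rel a a'"
  from Rep_fa_ideal_uminus[OF this[unfolded dl2_rel_def]] show "dl2_rel (- a) (- a')"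
    unfolding dl2_rel_def by (simp add: algebra_simps)
qed

lift_definition minus_dl2 :: "'k::field dl2 \<Rightarrow> 'k dl2 \<Rightarrow> 'k dl2" is "(-)"
proof -
  fix a a' b b' :: "'k free_alg"
  assume "dl2_rel a a'" "dl2_rel b b'"
  then have "Rep_fa ((a - a') + - (b - b')) \<in> DL2_ideal"
    unfolding dl2_rel_def by (intro Rep_fa_ideal_add Rep_fa_ideal_uminus)
  then show "dl2_rel (a - b) (a' - b')"
    unfolding dl2_rel_def by (simp add: algebra_simps)
qed

lift_definition times_dl2 :: "'k::field dl2 \<Rightarrow> 'k dl2 \<Rightarrow> 'k dl2" is "(*)"
proof -
  fix a a' b b' :: "'k free_alg"
  assume "dl2_rel a a'" "dl2_rel b b'"
  then have "Rep_fa ((a - a') * b + a' * (b - b')) \<in> DL2_ideal"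
    unfolding dl2_rel_def by (intro Rep_fa_ideal_add Rep_fa_ideal_mult_right Rep_fa_ideal_mult_left)
  then show "dl2_rel (a * b) (a' * b')"
    unfolding dl2_rel_def by (simp add: algebra_simps)
qed

instance
proof
  fix a b c :: "'a dl2"
  show "a * b * c = a * (b * c)" by transfer (simp add: dl2_rel_refl algebra_simps)
  show "(a + b) * c = a * c + b * c" by transfer (simp add: dl2_rel_refl algebra_simps)
  show "a * (b + c) = a * b + a * c" by transfer (simp add: dl2_rel_refl algebra_simps)
  show "1 * a = a" by transfer (simp add: dl2_rel_refl)
  show "a * 1 = a" by transfer (simp add: dl2_rel_refl)
  show "a + b + c = a + (b + c)" by transfer (simp add: dl2_rel_refl algebra_simps)
  show "a + b = b + a" by transfer (simp add: dl2_rel_refl algebra_simps)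
  show "0 + a = a" by transfer (simp add: dl2_rel_refl)
  show "- a + a = 0" by transfer (simp add: dl2_rel_refl)
  show "a - b = a + - b" by transfer (simp add: dl2_rel_refl)
  show "(0::'a dl2) \<noteq> 1"
    by transfer (use Rep_fa_one_notin_ideal Rep_fa_ideal_uminus in \<open>fastforce simp: dl2_rel_def\<close>)
qed

end

definition cls :: "'k::field falg \<Rightarrow> 'k dl2" where
  "cls f = abs_dl2 (Abs_fa f)"

lemma Abs_fa_add: "f \<in> fa_carrier \<Longrightarrow> g \<in> fa_carrier \<Longrightarrow> Abs_fa (fa_add f g) = Abs_fa f + Abs_fa g"
  by (metis Abs_fa_inverse Rep_fa_inverse plus_free_alg.rep_eq)

lemma Abs_fa_sub: "f \<in> fa_carrier \<Longrightarrow> g \<in> fa_carrier \<Longrightarrow> Abs_fa (fa_sub f g) = Abs_fa f - Abs_fa g"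
  by (metis Abs_fa_inverse Rep_fa_inverse minus_free_alg.rep_eq)

lemma Abs_fa_mult: "f \<in> fa_carrier \<Longrightarrow> g \<in> fa_carrier \<Longrightarrow> Abs_fa (fa_mult f g) = Abs_fa f * Abs_fa g"
  by (metis Abs_fa_inverse Rep_fa_inverse times_free_alg.rep_eq)

lemma cls_add: "f \<in> fa_carrier \<Longrightarrow> g \<in> fa_carrier \<Longrightarrow> cls (fa_add f g) = cls f + cls g"
  by (simp add: cls_def Abs_fa_add plus_dl2.abs_eq[symmetric] dl2_rel_refl)

lemma cls_sub: "f \<in> fa_carrier \<Longrightarrow> g \<in> fa_carrier \<Longrightarrow> cls (fa_sub f g) = cls f - cls g"
  by (simp add: cls_def Abs_fa_sub minus_dl2.abs_eq[symmetric] dl2_rel_refl)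

lemma cls_mult: "f \<in> fa_carrier \<Longrightarrow> g \<in> fa_carrier \<Longrightarrow> cls (fa_mult f g) = cls f * cls g"
  by (simp add: cls_def Abs_fa_mult times_dl2.abs_eq[symmetric] dl2_rel_refl)

lemma cls_one: "cls fa_one = 1"
  by (metis Rep_fa_inverse cls_def one_dl2_def one_free_alg.rep_eq)

lemma cls_zero: "cls fa_zero = 0"
  by (metis Rep_fa_inverse cls_def zero_dl2_def zero_free_alg.rep_eq)

lemma cls_eq_iff:
  "f \<in> fa_carrier \<Longrightarrow> g \<in> fa_carrier \<Longrightarrow> cls f = cls g \<longleftrightarrow> fa_sub f g \<in> DL2_ideal"
  by (simp add: cls_def dl2.abs_eq_iff dl2_rel_def minus_free_alg.rep_eq Abs_fa_inverse)

lemma cls_eq_zero_iff: "f \<in> fa_carrier \<Longrightarrow> cls f = 0 \<longleftrightarrow> f \<in> DL2_ideal"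
proof -
  have "fa_sub f fa_zero = f" by (simp add: fa_sub_def fa_zero_def)
  then show "f \<in> fa_carrier \<Longrightarrow> ?thesis"
    using cls_eq_iff[OF _ fa_carrier_zero, of f] by (simp add: cls_zero)
qed

lemma cls_surj: "\<exists>f\<in>fa_carrier. a = cls f"
proof -
  have "a = abs_dl2 (rep_dl2 a)" by (simp add: Quotient_abs_rep[OF Quotient_dl2])
  then show ?thesis unfolding cls_def by (metis Rep_fa Rep_fa_inverse)
qed

lemma cls_cases:
  obtains f where "f \<in> fa_carrier" "a = cls f"
  using cls_surj by blast

lift_definition dl2_rep :: "'k::field dl2 \<Rightarrow> 'k vec16 \<Rightarrow> 'k vec16" is "\<lambda>a. fa_rep (Rep_fa a)"
proof -
  fix a b :: "'k free_alg"
  assume "dl2_rel a b"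
  then have "fa_rep (Rep_fa (a - b)) v = (\<lambda>i. 0)" for v
    by (simp add: dl2_rel_def fa_rep_ideal)
  then have "fa_rep (Rep_fa a) v i - fa_rep (Rep_fa b) v i = 0" for v i
    by (metis minus_free_alg.rep_eq fa_rep_sub Rep_fa)
  then show "fa_rep (Rep_fa a) = fa_rep (Rep_fa b)"
    by (simp add: fun_eq_iff)
qed

lemma dl2_rep_cls: "f \<in> fa_carrier \<Longrightarrow> dl2_rep (cls f) = fa_rep f"
  by (simp add: cls_def dl2_rep.abs_eq Abs_fa_inverse)

lemma dl2_rep_mult: "dl2_rep (a * b) v = dl2_rep a (dl2_rep b v)"
  by (cases a rule: cls_cases, cases b rule: cls_cases)
     (simp add: cls_mult[symmetric] dl2_rep_cls fa_carrier_mult fa_rep_mult)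

lemma dl2_rep_add: "dl2_rep (a + b) v = (\<lambda>i. dl2_rep a v i + dl2_rep b v i)"
  by (cases a rule: cls_cases, cases b rule: cls_cases)
     (simp add: cls_add[symmetric] dl2_rep_cls fa_carrier_add fa_rep_add)

lemma dl2_rep_one: "dl2_rep 1 v = v"
  by (simp add: cls_one[symmetric] dl2_rep_cls fa_carrier_one fa_rep_one)

lemma dl2_rep_zero: "dl2_rep 0 v = (\<lambda>i. 0)"
  by (simp add: cls_zero[symmetric] dl2_rep_cls fa_carrier_zero fa_rep_zero)

lemma dl2_rep_sum: "finite S \<Longrightarrow> dl2_rep (\<Sum>t\<in>S. f t) v = (\<lambda>i. \<Sum>t\<in>S. dl2_rep (f t) v i)"
  by (induction S rule: finite_induct) (simp_all add: dl2_rep_zero dl2_rep_add)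

definition scalar :: "'k::field \<Rightarrow> 'k dl2" where
  "scalar c = cls (fa_smult c fa_one)"

lemma cls_smult: "f \<in> fa_carrier \<Longrightarrow> cls (fa_smult c f) = scalar c * cls f"
proof -
  assume "f \<in> fa_carrier"
  moreover have "fa_smult c f = fa_mult (fa_smult c fa_one) f"
    by (simp add: fa_mult_smult_left fa_mult_one_left)
  ultimately show ?thesis
    by (simp add: scalar_def cls_mult fa_carrier_smult fa_carrier_one)
qed

lemma scalar_commute: "scalar c * a = a * scalar c"
proof (cases a rule: cls_cases)
  case (1 f)
  have "fa_mult (fa_smult c fa_one) f = fa_mult f (fa_smult c fa_one)"
    by (simp add: fa_mult_smult_left fa_mult_smult_right fa_mult_one_left fa_mult_one_right)
  with 1 show ?thesis
    by (simp add: scalar_def cls_mult[symmetric] fa_carrier_smult fa_carrier_one)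
qed

lemma scalar_left_commute: "a * (scalar c * b) = scalar c * (a * b)"
  by (metis scalar_commute mult.assoc)

lemma scalar_add: "scalar (c + d) = scalar c + scalar d"
proof -
  have "fa_smult (c + d) fa_one = fa_add (fa_smult c fa_one) (fa_smult d fa_one)"
    by (simp add: fun_eq_iff fa_smult_def fa_add_def distrib_right)
  then show ?thesis unfolding scalar_def by (simp add: cls_add fa_carrier_smult fa_carrier_one)
qed

lemma scalar_mult: "scalar (c * d) = scalar c * scalar d"
proof -
  have "fa_smult (c * d) fa_one = fa_smult c (fa_smult d fa_one)"
    by (simp add: fun_eq_iff fa_smult_def)
  then show ?thesis unfolding scalar_def by (simp add: cls_smult fa_carrier_smult fa_carrier_one cls_one)
qed

lemma scalar_one: "scalar 1 = (1::'k::field dl2)"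
  by (simp add: scalar_def cls_one fa_smult_def)

lemma scalar_zero: "scalar 0 = 0"
  using scalar_add[of 0 0] by simp

lemma scalar_minus: "scalar (- c) = - scalar c"
  using scalar_add[of c "- c"] by (simp add: scalar_zero eq_neg_iff_add_eq_0 add.commute)

lemma scalar_scalar: "scalar c * (scalar d * b) = scalar (c * d) * b"
  by (simp add: scalar_mult mult.assoc)

lemma dl2_rep_scalar: "dl2_rep (scalar c) v = (\<lambda>i. c * v i)"
  by (simp add: scalar_def dl2_rep_cls fa_carrier_smult fa_carrier_one fa_rep_smult fa_rep_one)

definition dgen :: "gen \<Rightarrow> 'k::field dl2" where
  "dgen a = cls (fa_var a)"

abbreviation "dx \<equiv> dgen Gx"
abbreviation "dX \<equiv> dgen GX"
abbreviation "dg \<equiv> dgen Gg"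
abbreviation "dG \<equiv> dgen GG"

lemma dl2_rep_dgen: "dl2_rep (dgen a) v = rep_gen a v"
  by (simp add: dgen_def dl2_rep_cls fa_carrier_var fa_rep_var)

lemma cls_word: "cls (fa_word w) = prod_list (map dgen w)"
  by (induction w) (simp_all add: fa_word_Nil cls_one fa_word_Cons cls_mult fa_carrier_intros dgen_def)

lemma cls_sum:
  "finite S \<Longrightarrow> (\<And>s. s \<in> S \<Longrightarrow> F s \<in> fa_carrier) \<Longrightarrow> cls (fa_sum F S) = (\<Sum>s\<in>S. cls (F s))"
  by (induction S rule: finite_induct)
     (simp_all add: fa_sum_empty cls_zero fa_sum_insert cls_add fa_carrier_sum)

lemma cls_expansion:
  "f \<in> fa_carrier \<Longrightarrow> cls f = (\<Sum>w\<in>fa_supp f. scalar (f w) * prod_list (map dgen w))"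
proof -
  assume f: "f \<in> fa_carrier"
  have "cls (fa_sum (\<lambda>w. fa_smult (f w) (fa_word w)) (fa_supp f)) =
      (\<Sum>w\<in>fa_supp f. cls (fa_smult (f w) (fa_word w)))"
    using f[unfolded fa_carrier_iff] by (intro cls_sum) (simp_all add: fa_carrier_intros)
  then show ?thesis by (simp add: fa_expansion[OF f, symmetric] cls_smult fa_carrier_word cls_word)
qed

lemma cls_relation: "r \<in> DL2_relations \<Longrightarrow> cls r = 0"
  by (simp add: cls_eq_zero_iff DL2_relations_carrier DL2_ideal.rel)

lemma dl2_relations:
  "dx * dx = (0::'k::field dl2)" "dX * dX = (0::'k dl2)"
  "dg * dg = (1::'k dl2)" "dG * dG = (1::'k dl2)" "dg * dG = (dG * dg :: 'k dl2)"
  "dg * dx = - (dx * dg :: 'k dl2)" "dg * dX = - (dX * dg :: 'k dl2)"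
  "dG * dx = - (dx * dG :: 'k dl2)" "dG * dX = - (dX * dG :: 'k dl2)"
  "dx * dX + dX * dx = (1 - dg * dG :: 'k dl2)"
proof -
  have "\<forall>r\<in>DL2_relations. cls r = (0::'k dl2)"
    by (simp add: cls_relation)
  then show "dx * dx = (0::'k::field dl2)" "dX * dX = (0::'k dl2)"
    "dg * dg = (1::'k dl2)" "dG * dG = (1::'k dl2)" "dg * dG = (dG * dg :: 'k dl2)"
    "dg * dx = - (dx * dg :: 'k dl2)" "dg * dX = - (dX * dg :: 'k dl2)"
    "dG * dx = - (dx * dG :: 'k dl2)" "dG * dX = - (dX * dG :: 'k dl2)"
    "dx * dX + dX * dx = (1 - dg * dG :: 'k dl2)"
    by (simp_all add: DL2_relations_def cls_mult cls_add cls_sub cls_one fa_carrier_intros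
        eq_neg_iff_add_eq_0 dgen_def)
qed

lemma dl2_anticommute:
  "dx * dg = - (dg * dx :: 'k::field dl2)" "dX * dg = - (dg * dX :: 'k dl2)"
  "dx * dG = - (dG * dx :: 'k dl2)" "dX * dG = - (dG * dX :: 'k dl2)"
  by (simp_all add: dl2_relations)

section \<open>The subalgebra \<open>H\<^sub>\<alpha>\<^sub>\<beta>\<close>\<close>

definition H_alg :: "'k::field \<Rightarrow> 'k \<Rightarrow> 'k dl2 set" where
  "H_alg \<alpha> \<beta> = cls ` H_sub \<alpha> \<beta>"

definition dy :: "'k::field \<Rightarrow> 'k \<Rightarrow> 'k dl2" where
  "dy \<alpha> \<beta> = scalar \<alpha> * dx + scalar \<beta> * dX"

lemma H_sub_carrier: "h \<in> H_sub \<alpha> \<beta> \<Longrightarrow> h \<in> fa_carrier"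
  by (induction rule: H_sub.induct) (auto intro: fa_carrier_intros)

lemma cls_H_sub_induct [consumes 1, case_names one g G y add scalar mult]:
  assumes "a \<in> H_alg \<alpha> \<beta>"
    and "P 1" "P dg" "P dG" "P (dy \<alpha> \<beta>)"
    and "\<And>a b. P a \<Longrightarrow> P b \<Longrightarrow> P (a + b)"
    and "\<And>a c. P a \<Longrightarrow> P (scalar c * a)"
    and "\<And>a b. P a \<Longrightarrow> P b \<Longrightarrow> P (a * b)"
  shows "P a"
proof -
  have "P (cls h)" if "h \<in> H_sub \<alpha> \<beta>" for h
    using that
  proof (induction rule: H_sub.induct)
    case one
    show ?case using assms(2) by (simp add: cls_one)
  next
    case gen_g
    show ?case using assms(3) by (simp add: dgen_def)
  next
    case gen_G
    show ?case using assms(4) by (simp add: dgen_def)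
  next
    case gen_y
    show ?case using assms(5) by (simp add: dy_def dgen_def cls_add cls_smult fa_carrier_intros)
  next
    case (add a b)
    then show ?case using assms(6) by (simp add: cls_add H_sub_carrier)
  next
    case (smult a c)
    then show ?case using assms(7) by (simp add: cls_smult H_sub_carrier)
  next
    case (mult a b)
    then show ?case using assms(8) by (simp add: cls_mult H_sub_carrier)
  qed
  then show ?thesis using assms(1) by (auto simp: H_alg_def)
qed

lemma H_alg_one: "1 \<in> H_alg \<alpha> \<beta>"
  unfolding H_alg_def by (metis H_sub.one cls_one image_eqI)

lemma H_alg_dg: "dg \<in> H_alg \<alpha> \<beta>"
  unfolding H_alg_def dgen_def by (rule imageI) (rule H_sub.gen_g)

lemma H_alg_dG: "dG \<in> H_alg \<alpha> \<beta>"
  unfolding H_alg_def dgen_def by (rule imageI) (rule H_sub.gen_G)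

lemma H_alg_dy: "dy \<alpha> \<beta> \<in> H_alg \<alpha> \<beta>"
proof -
  have "cls (fa_add (fa_smult \<alpha> vx) (fa_smult \<beta> vX)) = dy \<alpha> \<beta>"
    by (simp add: dy_def dgen_def cls_add cls_smult fa_carrier_intros)
  then show ?thesis unfolding H_alg_def by (metis H_sub.gen_y imageI)
qed

lemma H_alg_add: "a \<in> H_alg \<alpha> \<beta> \<Longrightarrow> b \<in> H_alg \<alpha> \<beta> \<Longrightarrow> a + b \<in> H_alg \<alpha> \<beta>"
  unfolding H_alg_def by (elim imageE) (metis H_sub.add H_sub_carrier cls_add imageI)

lemma H_alg_mult: "a \<in> H_alg \<alpha> \<beta> \<Longrightarrow> b \<in> H_alg \<alpha> \<beta> \<Longrightarrow> a * b \<in> H_alg \<alpha> \<beta>"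
  unfolding H_alg_def by (elim imageE) (metis H_sub.mult H_sub_carrier cls_mult imageI)

lemma H_alg_scalar: "a \<in> H_alg \<alpha> \<beta> \<Longrightarrow> scalar c * a \<in> H_alg \<alpha> \<beta>"
  unfolding H_alg_def by (elim imageE) (metis H_sub.smult H_sub_carrier cls_smult imageI)

definition H_monomial :: "'k::field dl2 \<Rightarrow> bool \<times> bool \<times> bool \<Rightarrow> 'k dl2" where
  "H_monomial y = (\<lambda>(a, b, d). (if a then dg else 1) * ((if b then dG else 1) * (if d then y else 1)))"

definition monomial_span :: "'k::field dl2 \<Rightarrow> 'k dl2 set" where
  "monomial_span y = {\<Sum>t\<in>UNIV. scalar (l t) * H_monomial y t | l. True}"

lemma monomial_spanI: "u = (\<Sum>t\<in>UNIV. scalar (l t) * H_monomial y t) \<Longrightarrow> u \<in> monomial_span y"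
  unfolding monomial_span_def by blast

lemma monomial_spanE:
  assumes "u \<in> monomial_span y"
  obtains l where "u = (\<Sum>t\<in>UNIV. scalar (l t) * H_monomial y t)"
  using assms unfolding monomial_span_def by blast

lemma monomial_span_add: "u \<in> monomial_span y \<Longrightarrow> v \<in> monomial_span y \<Longrightarrow> u + v \<in> monomial_span y"
proof (elim monomial_spanE)
  fix l l' assume "u = (\<Sum>t\<in>UNIV. scalar (l t) * H_monomial y t)" "v = (\<Sum>t\<in>UNIV. scalar (l' t) * H_monomial y t)"
  then have "u + v = (\<Sum>t\<in>UNIV. scalar (l t + l' t) * H_monomial y t)"
    by (simp add: scalar_add distrib_right sum.distrib)
  then show ?thesis by (rule monomial_spanI)
qed

lemma monomial_span_scalar: "u \<in> monomial_span y \<Longrightarrow> scalar c * u \<in> monomial_span y"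
proof (elim monomial_spanE)
  fix l assume "u = (\<Sum>t\<in>UNIV. scalar (l t) * H_monomial y t)"
  then have "scalar c * u = (\<Sum>t\<in>UNIV. scalar (c * l t) * H_monomial y t)"
    by (simp add: scalar_mult sum_distrib_left mult.assoc)
  then show ?thesis by (rule monomial_spanI)
qed

lemma monomial_span_zero: "0 \<in> monomial_span y"
  by (rule monomial_spanI[of _ "\<lambda>t. 0"]) (simp add: scalar_zero)

lemma monomial_span_monomial: "H_monomial y s \<in> monomial_span y"
proof (rule monomial_spanI[of _ "\<lambda>t. if t = s then 1 else 0"])
  have "(\<Sum>t\<in>UNIV. scalar (if t = s then 1 else 0) * H_monomial y t) =
      (\<Sum>t\<in>UNIV. if t = s then H_monomial y t else 0)"
    by (rule sum.cong) (auto simp: scalar_zero scalar_one)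
  then show "H_monomial y s = (\<Sum>t\<in>UNIV. scalar (if t = s then 1 else 0) * H_monomial y t)"
    by simp
qed

lemma monomial_span_uminus: "u \<in> monomial_span y \<Longrightarrow> - u \<in> monomial_span y"
  using monomial_span_scalar[of u y "-1"] by (simp add: scalar_minus scalar_one)

lemma monomial_span_diff: "u \<in> monomial_span y \<Longrightarrow> v \<in> monomial_span y \<Longrightarrow> u - v \<in> monomial_span y"
  using monomial_span_add[OF _ monomial_span_uminus] by (metis diff_conv_add_uminus)

lemma monomial_span_sum:
  "finite S \<Longrightarrow> (\<And>s. s \<in> S \<Longrightarrow> F s \<in> monomial_span y) \<Longrightarrow> (\<Sum>s\<in>S. F s) \<in> monomial_span y"
  by (induction S rule: finite_induct) (simp_all add: monomial_span_zero monomial_span_add)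

lemma monomial_span_monomials:
  "1 \<in> monomial_span y" "y \<in> monomial_span y" "dG \<in> monomial_span y" "dG * y \<in> monomial_span y"
  "dg \<in> monomial_span y" "dg * y \<in> monomial_span y" "dg * dG \<in> monomial_span y"
  "dg * (dG * y) \<in> monomial_span y"
  using monomial_span_monomial[of y "(False, False, False)"] monomial_span_monomial[of y "(False, False, True)"]
    monomial_span_monomial[of y "(False, True, False)"] monomial_span_monomial[of y "(False, True, True)"]
    monomial_span_monomial[of y "(True, False, False)"] monomial_span_monomial[of y "(True, False, True)"]
    monomial_span_monomial[of y "(True, True, False)"] monomial_span_monomial[of y "(True, True, True)"]
  by (simp_all add: H_monomial_def)

lemma monomial_span_scalar_const: "scalar c \<in> monomial_span y"
  using monomial_span_scalar[OF monomial_span_monomials(1)[of y], of c] by simp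

lemma monomial_span_mult_left:
  assumes "\<And>t. e * H_monomial y t \<in> monomial_span y" "u \<in> monomial_span y"
  shows "e * u \<in> monomial_span y"
proof -
  obtain l where "u = (\<Sum>t\<in>UNIV. scalar (l t) * H_monomial y t)"
    using assms(2) by (rule monomial_spanE)
  then have "e * u = (\<Sum>t\<in>UNIV. scalar (l t) * (e * H_monomial y t))"
    by (simp add: sum_distrib_left scalar_left_commute)
  also have "\<dots> \<in> monomial_span y"
    by (rule monomial_span_sum) (simp_all add: monomial_span_scalar assms(1))
  finally show ?thesis .
qed

lemma dg_dG_cancel:
  "dg * (dg * r) = r" "dG * (dG * r) = r" "dG * (dg * r) = dg * (dG * r)" "dG * dg = dg * dG"
  by (simp_all add: dl2_relations(3,4,5) mult.assoc[symmetric])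

context
  fixes y :: "'k::field dl2" and c :: 'k
  assumes y_dg: "y * dg = - (dg * y)" and y_dG: "y * dG = - (dG * y)"
    and y_y: "y * y = scalar c * (1 - dg * dG)"
begin

lemma y_mult_rules:
  "y * (dg * r) = - (dg * (y * r))" "y * (dG * r) = - (dG * (y * r))"
  "y * (y * r) = scalar c * r - scalar c * (dg * (dG * r))"
  by (simp_all add: mult.assoc[symmetric] y_dg y_dG y_y right_diff_distrib left_diff_distrib)

lemma monomial_span_dg_mult: "u \<in> monomial_span y \<Longrightarrow> dg * u \<in> monomial_span y"
  by (rule monomial_span_mult_left, case_tac t)
     (auto simp: H_monomial_def dl2_relations(3,4) dg_dG_cancel monomial_span_monomials)

lemma monomial_span_dG_mult: "u \<in> monomial_span y \<Longrightarrow> dG * u \<in> monomial_span y"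
  by (rule monomial_span_mult_left, case_tac t)
     (auto simp: H_monomial_def dl2_relations(3,4) dg_dG_cancel monomial_span_monomials)

lemma monomial_span_y_mult: "u \<in> monomial_span y \<Longrightarrow> y * u \<in> monomial_span y"
  by (rule monomial_span_mult_left, case_tac t)
     (auto simp: H_monomial_def dl2_relations(3,4) dg_dG_cancel y_mult_rules y_y right_diff_distrib
        scalar_left_commute[of dg] scalar_left_commute[of dG] y_dg y_dG
        scalar_commute[of _ dg, symmetric] scalar_commute[of _ dG, symmetric]
        intro!: monomial_span_uminus monomial_span_diff monomial_span_scalar monomial_span_monomials
          monomial_span_scalar_const)

lemma monomial_span_mult: "u \<in> monomial_span y \<Longrightarrow> v \<in> monomial_span y \<Longrightarrow> u * v \<in> monomial_span y"
proof -
  assume u: "u \<in> monomial_span y" and v: "v \<in> monomial_span y"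
  from u obtain l where u: "u = (\<Sum>t\<in>UNIV. scalar (l t) * H_monomial y t)"
    by (rule monomial_spanE)
  have "H_monomial y t * v \<in> monomial_span y" for t
    by (cases t) (auto simp: H_monomial_def mult.assoc
        intro!: monomial_span_dg_mult monomial_span_dG_mult monomial_span_y_mult v)
  then have "(\<Sum>t\<in>UNIV. scalar (l t) * (H_monomial y t * v)) \<in> monomial_span y"
    by (intro monomial_span_sum) (simp_all add: monomial_span_scalar)
  then show "u * v \<in> monomial_span y"
    by (simp add: u sum_distrib_right mult.assoc)
qed

end

lemma dy_anticommute:
  "dy \<alpha> \<beta> * dg = - (dg * dy \<alpha> \<beta>)" "dy \<alpha> \<beta> * dG = - (dG * dy \<alpha> \<beta>)"
  by (simp_all add: dy_def distrib_left distrib_right mult.assoc dl2_anticommute scalar_left_commute)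

lemma dy_square: "dy \<alpha> \<beta> * dy \<alpha> \<beta> = scalar (\<alpha> * \<beta>) * (1 - dg * dG)"
proof -
  have "dy \<alpha> \<beta> * dy \<alpha> \<beta> = scalar (\<alpha> * \<alpha>) * (dx * dx) + scalar (\<alpha> * \<beta>) * (dx * dX) +
      scalar (\<beta> * \<alpha>) * (dX * dx) + scalar (\<beta> * \<beta>) * (dX * dX)"
    by (simp add: dy_def distrib_left distrib_right mult.assoc scalar_left_commute[of dx]
        scalar_left_commute[of dX] scalar_scalar add.assoc)
  also have "\<dots> = scalar (\<alpha> * \<beta>) * (dx * dX + dX * dx)"
    by (simp add: dl2_relations(1,2) distrib_left mult.commute)
  also have "\<dots> = scalar (\<alpha> * \<beta>) * (1 - dg * dG)"
    by (simp add: dl2_relations(10))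
  finally show ?thesis .
qed

lemma H_alg_subset_monomial_span: "H_alg \<alpha> \<beta> \<subseteq> monomial_span (dy \<alpha> \<beta>)"
proof
  fix a assume "a \<in> H_alg \<alpha> \<beta>"
  then show "a \<in> monomial_span (dy \<alpha> \<beta>)"
  proof (induction rule: cls_H_sub_induct)
    case (mult a b)
    then show ?case by (rule monomial_span_mult[OF dy_anticommute dy_square])
  qed (simp_all add: monomial_span_monomials monomial_span_add monomial_span_scalar)
qed

section \<open>\<open>D(\<Lambda>\<^sub>2)\<close> is spanned by \<open>1\<close> and \<open>z\<close> over \<open>H\<^sub>\<alpha>\<^sub>\<beta>\<close>\<close>

definition span1z :: "'k::field dl2 set \<Rightarrow> 'k dl2 \<Rightarrow> 'k dl2 set" where
  "span1z S z = {a + b * z | a b. a \<in> S \<and> b \<in> S}"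

lemma dl2_right_induct:
  assumes one: "1 \<in> A"
    and add: "\<And>a b. a \<in> A \<Longrightarrow> b \<in> A \<Longrightarrow> a + b \<in> A"
    and scalar: "\<And>a c. a \<in> A \<Longrightarrow> scalar c * a \<in> A"
    and step: "\<And>a e. a \<in> A \<Longrightarrow> a * dgen e \<in> A"
  shows "a \<in> A"
proof -
  obtain f where f: "f \<in> fa_carrier" "a = cls f"
    by (rule cls_cases)
  have words: "prod_list (map dgen w) \<in> A" for w
    by (induction w rule: rev_induct) (simp_all add: one step)
  have zero: "0 \<in> A"
    using scalar[OF one, of 0] by (simp add: scalar_zero)
  have "finite (fa_supp f)"
    using f by (simp add: fa_carrier_iff)
  then have "(\<Sum>w\<in>fa_supp f. scalar (f w) * prod_list (map dgen w)) \<in> A"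
    by (induction rule: finite_induct) (simp_all add: zero add scalar words)
  then show ?thesis
    using f by (simp add: cls_expansion)
qed

lemma span1z_mult_generator:
  fixes z W y :: "'k::field dl2" and S :: "'k dl2 set"
  assumes zz: "z * z = 0" and WW: "W * W = 0" and zW: "z * W + W * z = 1 - dg * dG"
    and z_anticommute: "z * dg = - (dg * z)" "z * dG = - (dG * z)"
    and y: "y = scalar p * z + scalar q * W" and q: "q \<noteq> 0"
    and S: "1 \<in> S" "y \<in> S" "dg \<in> S" "dG \<in> S"
    and S_add: "\<And>a b. a \<in> S \<Longrightarrow> b \<in> S \<Longrightarrow> a + b \<in> S"
    and S_mult: "\<And>a b. a \<in> S \<Longrightarrow> b \<in> S \<Longrightarrow> a * b \<in> S"
    and S_scalar: "\<And>a c. a \<in> S \<Longrightarrow> scalar c * a \<in> S"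
    and t: "t \<in> span1z S z" and e: "e \<in> {dg, dG, z, W}"
  shows "t * e \<in> span1z S z"
proof -
  obtain a b where ab: "a \<in> S" "b \<in> S" "t = a + b * z"
    using t unfolding span1z_def by blast
  have S_uminus: "\<And>a. a \<in> S \<Longrightarrow> - a \<in> S"
    using S_scalar[of _ "-1"] by (simp add: scalar_minus scalar_one)
  have S_diff: "\<And>a b. a \<in> S \<Longrightarrow> b \<in> S \<Longrightarrow> a - b \<in> S"
    using S_add S_uminus by (metis diff_conv_add_uminus)
  have S_zero: "0 \<in> S"
    using S_scalar[OF S(1), of 0] by (simp add: scalar_zero)
  consider "e = dg" | "e = dG" | "e = z" | "e = W"
    using e by blast
  then show ?thesis
  proof cases
    case 1
    have "t * e = a * dg + (- (b * dg)) * z"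
      using ab 1 by (simp add: algebra_simps z_anticommute)
    then show ?thesis unfolding span1z_def using ab S S_mult S_uminus by blast
  next
    case 2
    have "t * e = a * dG + (- (b * dG)) * z"
      using ab 2 by (simp add: algebra_simps z_anticommute)
    then show ?thesis unfolding span1z_def using ab S S_mult S_uminus by blast
  next
    case 3
    have "t * e = 0 + a * z"
      using ab 3 by (simp add: algebra_simps zz)
    then show ?thesis unfolding span1z_def using ab S_zero by blast
  next
    case 4
    \<comment> \<open>Solve \<open>y = p z + q W\<close> for \<open>W\<close>; then \<open>W z\<close> and, by the last relation, \<open>z W\<close> lie in \<open>S + S z\<close>.\<close>
    have "scalar (1 / q) * y = scalar (p / q) * z + W"
      using q by (simp add: y distrib_left scalar_scalar scalar_one)
    then have W: "W = scalar (1 / q) * y - scalar (p / q) * z"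
      by (simp add: algebra_simps)
    have "W * z = scalar (1 / q) * (y * z) - scalar (p / q) * (z * z)"
      by (subst W) (simp add: algebra_simps)
    then have Wz: "W * z = scalar (1 / q) * (y * z)"
      by (simp add: zz)
    have zW': "z * W = 1 - dg * dG - scalar (1 / q) * (y * z)"
      using zW Wz by (simp add: eq_diff_eq)
    have "t * e = a * W + b * (z * W)"
      using ab 4 by (simp add: algebra_simps)
    also have "\<dots> = a * (scalar (1 / q) * y - scalar (p / q) * z) + b * (1 - dg * dG - scalar (1 / q) * (y * z))"
      by (subst W, subst zW') simp
    also have "\<dots> = (scalar (1 / q) * (a * y) + b - b * (dg * dG)) +
        (scalar (- (p / q)) * a + scalar (- (1 / q)) * (b * y)) * z"
      by (simp add: algebra_simps scalar_left_commute scalar_minus)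
    finally have "t * e = (scalar (1 / q) * (a * y) + b - b * (dg * dG)) +
        (scalar (- (p / q)) * a + scalar (- (1 / q)) * (b * y)) * z" .
    moreover have "scalar (1 / q) * (a * y) + b - b * (dg * dG) \<in> S"
      by (intro S_diff S_add S_scalar S_mult ab S)
    moreover have "scalar (- (p / q)) * a + scalar (- (1 / q)) * (b * y) \<in> S"
      by (intro S_add S_scalar S_mult ab S)
    ultimately show ?thesis unfolding span1z_def by blast
  qed
qed

text \<open>The generator \<open>z\<close> completing \<open>y = \<alpha>x + \<beta>X\<close> to a basis of \<open>span{x, X}\<close>.\<close>

definition complement_gen :: "'k::field \<Rightarrow> 'k \<Rightarrow> gen" where
  "complement_gen \<alpha> \<beta> = (if \<beta> \<noteq> 0 then Gx else GX)"

lemma span1z_H_alg: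
  fixes \<alpha> \<beta> :: "'k::field"
  assumes "\<alpha> \<noteq> 0 \<or> \<beta> \<noteq> 0"
  shows "a \<in> span1z (H_alg \<alpha> \<beta>) (dgen (complement_gen \<alpha> \<beta>))"
proof (rule dl2_right_induct)
  let ?z = "dgen (complement_gen \<alpha> \<beta>) :: 'k dl2"
  show "1 \<in> span1z (H_alg \<alpha> \<beta>) ?z"
    unfolding span1z_def using H_alg_one H_alg_scalar[OF H_alg_one, of 0]
    by (force simp: scalar_zero)
  show "a + b \<in> span1z (H_alg \<alpha> \<beta>) ?z"
    if ab: "a \<in> span1z (H_alg \<alpha> \<beta>) ?z" "b \<in> span1z (H_alg \<alpha> \<beta>) ?z" for a b
  proof -
    obtain a1 a2 b1 b2 where H: "a1 \<in> H_alg \<alpha> \<beta>" "a2 \<in> H_alg \<alpha> \<beta>" "b1 \<in> H_alg \<alpha> \<beta>" "b2 \<in> H_alg \<alpha> \<beta>"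
      and "a = a1 + a2 * ?z" "b = b1 + b2 * ?z"
      using ab unfolding span1z_def by blast
    then have "a + b = (a1 + b1) + (a2 + b2) * ?z"
      by (simp add: algebra_simps)
    with H show ?thesis
      unfolding span1z_def by (blast intro: H_alg_add)
  qed
  show "scalar c * u \<in> span1z (H_alg \<alpha> \<beta>) ?z"
    if u: "u \<in> span1z (H_alg \<alpha> \<beta>) ?z" for u c
  proof -
    obtain u1 u2 where H: "u1 \<in> H_alg \<alpha> \<beta>" "u2 \<in> H_alg \<alpha> \<beta>" and "u = u1 + u2 * ?z"
      using u unfolding span1z_def by blast
    then have "scalar c * u = scalar c * u1 + (scalar c * u2) * ?z"
      by (simp add: distrib_left mult.assoc)
    with H show ?thesis
      unfolding span1z_def by (blast intro: H_alg_scalar)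
  qed
  show "a * dgen e \<in> span1z (H_alg \<alpha> \<beta>) ?z"
    if a: "a \<in> span1z (H_alg \<alpha> \<beta>) ?z" for a e
  proof -
    note H = H_alg_one H_alg_dy H_alg_dg H_alg_dG H_alg_add H_alg_mult H_alg_scalar
    have e: "dgen e \<in> {dg, dG, dx, dX}" "dgen e \<in> {dg, dG, dX, dx}"
      by (cases e; simp)+
    show ?thesis
    proof (cases "\<beta> \<noteq> 0")
      case True
      then have z: "?z = dx" by (simp add: complement_gen_def)
      show ?thesis
        using span1z_mult_generator[OF dl2_relations(1,2,10) dl2_anticommute(1,3) dy_def True H
            a[unfolded z] e(1)]
        by (simp add: z)
    next
      case False
      with assms have "\<alpha> \<noteq> 0" by simp
      have zW: "dX * dx + dx * dX = 1 - dg * dG"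
        using dl2_relations(10) by (simp add: add.commute)
      have y: "dy \<alpha> \<beta> = scalar \<beta> * dX + scalar \<alpha> * dx"
        by (simp add: dy_def add.commute)
      from False have z: "?z = dX" by (simp add: complement_gen_def)
      show ?thesis
        using span1z_mult_generator[OF dl2_relations(2,1) zW dl2_anticommute(2,4) y \<open>\<alpha> \<noteq> 0\<close> H
            a[unfolded z] e(2)]
        by (simp add: z)
    qed
  qed
qed

section \<open>Independence of \<open>1\<close> and \<open>z\<close> over \<open>H\<^sub>\<alpha>\<^sub>\<beta>\<close>\<close>

definition e0 :: "'k::field vec16" where
  "e0 = (\<lambda>i. if i = (False, False, False, False) then 1 else 0)"

lemma sum_UNIV_bool3:
  "(\<Sum>t\<in>(UNIV :: (bool \<times> bool \<times> bool) set). f t) =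
    f (False, False, False) + f (False, False, True) + f (False, True, False) + f (False, True, True) +
    f (True, False, False) + f (True, False, True) + f (True, True, False) + f (True, True, True)"
  by (simp add: UNIV_Times_UNIV[symmetric] sum.cartesian_product[symmetric] UNIV_bool
      del: UNIV_Times_UNIV)
     (simp add: algebra_simps)

lemma dl2_rep_H_monomial:
  "dl2_rep (H_monomial y (a, b, d)) v =
    (if a then rep_gen Gg else id) ((if b then rep_gen GG else id) ((if d then dl2_rep y else id) v))"
  by (simp add: H_monomial_def dl2_rep_mult dl2_rep_one dl2_rep_dgen)

lemma dl2_rep_dy: "dl2_rep (dy \<alpha> \<beta>) v = (\<lambda>i. \<alpha> * rep_gen Gx v i + \<beta> * rep_gen GX v i)"
  by (simp add: dy_def dl2_rep_add dl2_rep_mult dl2_rep_scalar dl2_rep_dgen)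

lemma H_monomial_coeffs_eq_zero:
  fixes \<alpha> \<beta> :: "'k::field"
  assumes "\<alpha> \<noteq> 0 \<or> \<beta> \<noteq> 0"
    and "dl2_rep ((\<Sum>t\<in>UNIV. scalar (l t) * H_monomial (dy \<alpha> \<beta>) t) +
          (\<Sum>t\<in>UNIV. scalar (l' t) * H_monomial (dy \<alpha> \<beta>) t) * dgen (complement_gen \<alpha> \<beta>)) e0 = (\<lambda>i. 0)"
  shows "l t = 0 \<and> l' t = 0"
proof -
  let ?c = "complement_gen \<alpha> \<beta>"
  have "\<forall>i. (\<Sum>t\<in>UNIV. l t * dl2_rep (H_monomial (dy \<alpha> \<beta>) t) e0 i) +
      (\<Sum>t\<in>UNIV. l' t * dl2_rep (H_monomial (dy \<alpha> \<beta>) t) (rep_gen ?c e0) i) = 0"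
    using assms(2) by (simp add: fun_eq_iff dl2_rep_add dl2_rep_mult dl2_rep_sum dl2_rep_scalar dl2_rep_dgen)
  note E = this[unfolded sum_UNIV_bool3 dl2_rep_H_monomial dl2_rep_dy split_paired_All all_bool_eq]
  have "\<forall>a b d. l (a, b, d) = 0 \<and> l' (a, b, d) = 0"
    unfolding all_bool_eq using E assms(1)
    by (cases "\<beta> \<noteq> 0") (auto simp: complement_gen_def e0_def sign_eq_def)
  then show ?thesis by (cases t) simp
qed

lemma H_alg_independent:
  fixes \<alpha> \<beta> :: "'k::field"
  assumes "\<alpha> \<noteq> 0 \<or> \<beta> \<noteq> 0" and "a \<in> H_alg \<alpha> \<beta>" "b \<in> H_alg \<alpha> \<beta>"
    and "a + b * dgen (complement_gen \<alpha> \<beta>) = 0"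
  shows "a = 0 \<and> b = 0"
proof -
  obtain l where a: "a = (\<Sum>t\<in>UNIV. scalar (l t) * H_monomial (dy \<alpha> \<beta>) t)"
    using assms(2) H_alg_subset_monomial_span by (blast elim: monomial_spanE)
  obtain l' where b: "b = (\<Sum>t\<in>UNIV. scalar (l' t) * H_monomial (dy \<alpha> \<beta>) t)"
    using assms(3) H_alg_subset_monomial_span by (blast elim: monomial_spanE)
  have "dl2_rep (a + b * dgen (complement_gen \<alpha> \<beta>)) e0 = (\<lambda>i. 0)"
    by (simp add: assms(4) dl2_rep_zero)
  then have "l t = 0 \<and> l' t = 0" for t
    using H_monomial_coeffs_eq_zero[OF assms(1)] by (simp add: a b)
  then show ?thesis
    by (simp add: a b scalar_zero)
qed

section \<open>Freeness\<close>

lemma fa_sum_pair: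
  assumes "x \<noteq> z"
  shows "fa_sum (\<lambda>b. fa_mult (c b) b) {b \<in> {x, z}. c b \<noteq> fa_zero} =
    fa_add (fa_mult (c x) x) (fa_mult (c z) z)"
proof (rule ext)
  fix w
  have "fa_sum (\<lambda>b. fa_mult (c b) b) {b \<in> {x, z}. c b \<noteq> fa_zero} w = (\<Sum>b\<in>{x, z}. fa_mult (c b) b w)"
    unfolding fa_sum_def by (rule sum.mono_neutral_left) (auto simp: fa_mult_def fa_zero_def)
  then show "fa_sum (\<lambda>b. fa_mult (c b) b) {b \<in> {x, z}. c b \<noteq> fa_zero} w =
      fa_add (fa_mult (c x) x) (fa_mult (c z) z) w"
    using assms by (simp add: fa_add_def)
qed

lemma DL2_free_left_module_over_H_if_basis:
  fixes \<alpha> \<beta> :: "'k::field" and z :: "'k falg"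
  assumes z: "z \<in> fa_carrier" "z \<noteq> fa_one"
    and span: "\<And>a. a \<in> span1z (H_alg \<alpha> \<beta>) (cls z)"
    and indep: "\<And>a b. a \<in> H_alg \<alpha> \<beta> \<Longrightarrow> b \<in> H_alg \<alpha> \<beta> \<Longrightarrow> a + b * cls z = 0 \<Longrightarrow> a = 0 \<and> b = 0"
  shows "DL2_free_left_module_over_H \<alpha> \<beta>"
proof -
  have comb: "fa_sum (\<lambda>b. fa_mult (c b) b) {b \<in> {fa_one, z}. c b \<noteq> fa_zero} =
      fa_add (c fa_one) (fa_mult (c z) z)" for c :: "'k falg \<Rightarrow> 'k falg"
    using fa_sum_pair[OF z(2)[symmetric]] by (simp add: fa_mult_one_right)
  have cls_comb: "cls (fa_add h1 (fa_mult h2 z)) = cls h1 + cls h2 * cls z"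
    if "h1 \<in> H_sub \<alpha> \<beta>" "h2 \<in> H_sub \<alpha> \<beta>" for h1 h2
    using that by (simp add: cls_add cls_mult H_sub_carrier fa_carrier_mult z(1))
  show ?thesis
    unfolding DL2_free_left_module_over_H_def
  proof (intro exI[of _ "{fa_one, z}"] conjI ballI allI impI)
    show "{fa_one, z} \<subseteq> fa_carrier"
      using z(1) fa_carrier_one by simp
    fix f :: "'k falg"
    assume f: "f \<in> fa_carrier"
    obtain h1 h2 where h: "h1 \<in> H_sub \<alpha> \<beta>" "h2 \<in> H_sub \<alpha> \<beta>" and "cls f = cls h1 + cls h2 * cls z"
      using span[of "cls f"] unfolding span1z_def H_alg_def by blast
    then have "cls f = cls (fa_add h1 (fa_mult h2 z))"
      by (simp add: cls_comb)
    then have "fa_sub f (fa_add h1 (fa_mult h2 z)) \<in> DL2_ideal"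
      using h by (simp add: cls_eq_iff f fa_carrier_add fa_carrier_mult H_sub_carrier z(1))
    then show "\<exists>c. (\<forall>b\<in>{fa_one, z}. c b \<in> H_sub \<alpha> \<beta>) \<and> finite {b \<in> {fa_one, z}. c b \<noteq> fa_zero} \<and>
        fa_sub f (fa_sum (\<lambda>b. fa_mult (c b) b) {b \<in> {fa_one, z}. c b \<noteq> fa_zero}) \<in> DL2_ideal"
    proof (intro exI conjI)
      define c :: "'k falg \<Rightarrow> 'k falg" where "c = (\<lambda>b. if b = fa_one then h1 else h2)"
      have c: "c fa_one = h1" "c z = h2"
        using z(2) by (simp_all add: c_def)
      show "\<forall>b\<in>{fa_one, z}. c b \<in> H_sub \<alpha> \<beta>"
        using h c by simp
      show "finite {b \<in> {fa_one, z}. c b \<noteq> fa_zero}"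
        by simp
      show "fa_sub f (fa_sum (\<lambda>b. fa_mult (c b) b) {b \<in> {fa_one, z}. c b \<noteq> fa_zero}) \<in> DL2_ideal"
        unfolding comb c by fact
    qed
  next
    fix c :: "'k falg \<Rightarrow> 'k falg" and b
    assume c: "(\<forall>b\<in>{fa_one, z}. c b \<in> H_sub \<alpha> \<beta>) \<and> finite {b \<in> {fa_one, z}. c b \<noteq> fa_zero} \<and>
        fa_sum (\<lambda>b. fa_mult (c b) b) {b \<in> {fa_one, z}. c b \<noteq> fa_zero} \<in> DL2_ideal"
      and b: "b \<in> {fa_one, z}"
    from c have H: "c fa_one \<in> H_sub \<alpha> \<beta>" "c z \<in> H_sub \<alpha> \<beta>"
      by simp_all
    from c have "fa_add (c fa_one) (fa_mult (c z) z) \<in> DL2_ideal"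
      by (simp only: comb)
    moreover have "fa_add (c fa_one) (fa_mult (c z) z) \<in> fa_carrier"
      using H by (simp add: fa_carrier_add fa_carrier_mult H_sub_carrier z(1))
    ultimately have "cls (fa_add (c fa_one) (fa_mult (c z) z)) = 0"
      by (simp add: cls_eq_zero_iff)
    then have "cls (c fa_one) + cls (c z) * cls z = 0"
      by (simp add: cls_comb[OF H])
    then have "cls (c fa_one) = 0 \<and> cls (c z) = 0"
      using H by (intro indep) (simp_all add: H_alg_def)
    then show "c b \<in> DL2_ideal"
      using H b by (auto simp: cls_eq_zero_iff H_sub_carrier)
  qed
qed

theorem mainTheorem5:
  fixes \<alpha> \<beta> :: "'k::field"
  assumes "algebraically_closed_field TYPE('k)"
    and "(2::'k) \<noteq> 0"
    and "\<alpha> \<noteq> 0 \<or> \<beta> \<noteq> 0"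
  shows "DL2_free_left_module_over_H \<alpha> \<beta>"
proof (rule DL2_free_left_module_over_H_if_basis)
  let ?z = "fa_var (complement_gen \<alpha> \<beta>) :: 'k falg"
  show "?z \<in> fa_carrier"
    by (rule fa_carrier_var)
  have "?z [] \<noteq> fa_one []"
    by (simp add: fa_var_def fa_one_def)
  then show "?z \<noteq> fa_one"
    by metis
  show "a \<in> span1z (H_alg \<alpha> \<beta>) (cls ?z)" for a
    using span1z_H_alg[OF assms(3)] by (simp add: dgen_def)
  show "a = 0 \<and> b = 0"
    if "a \<in> H_alg \<alpha> \<beta>" "b \<in> H_alg \<alpha> \<beta>" "a + b * cls ?z = 0" for a b
    using H_alg_independent[OF assms(3) that(1,2)] that(3) by (simp add: dgen_def)
qed

end
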